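(* Let $2\leq p\leq q$ be integers and let $BS(p,q)=\langle a,t\mid ta^pt^{-1}=a^q\rangle$ with generating set $\{a,t\}$. Write $p=2k$ or $p=2k+1$ and $q=2\ell$ or $q=2\ell+1$ with integers $k,\ell$, and set $C_k=1$ if $p=2k$, $C_k=2$ if $p=2k+1$; $C_\ell=1$ if $q=2\ell$, $C_\ell=2$ if $q=2\ell+1$. If $4\leq p\leq q$, the growth rate of $BS(p,q)$ is bounded below by the largest real zero of $$P_{pq}(x)=x^{\ell+1}-x^{\ell}-2(x^{\ell-1}+x^{\ell-2}+\cdots+x^{\ell-k+1})-C_kx^{\ell-k}-2(x^{\ell-1}+x^{\ell-2}+\cdots+x)-C_\ell .$$ In the remaining cases the growth rate of $BS(p,q)$ is bounded below by the largest real zero of the polynomial $P_{pq}$ given by: $P_{22}(x)=x^2-x-2$; $P_{23}(x)=x^2-x-3$; $P_{2q}(x)=x^{\ell+1}-x^{\ell}-x^{\ell-1}-2(x^{\ell-1}+x^{\ell-2}+\cdots+x)-C_\ell$ for $q\geq 4$; $P_{33}(x)=x^2-x-4$; $P_{3q}(x)=x^{\ell+1}-x^{\ell}-2x^{\ell-1}-2(x^{\ell-1}+x^{\ell-2}+\cdots+x)-C_\ell$ for $q\geq 4$.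
   Context: For a group $G$ generated by a finite set $S$, let $\gamma(n)=\#\{x\in G:\|x\|_S\leq n\}$, where $\|\cdot\|_S$ is the word length with respect to $S\cup S^{-1}$. The growth rate of $G$ with respect to $S$ is $\lim_{n\to\infty}\gamma(n)^{1/n}$. *)

theory Defs
  imports Complex_Main
begin

text \<open>Generators a, t. A letter is a generator together with a flag: False = the
generator itself, True = its inverse. Words are lists of letters, i.e. words over
S \<union> S^-1 with S = {a, t}.\<close>

datatype gen = GA | GT

type_synonym letter = "gen \<times> bool"

definition linv :: "letter \<Rightarrow> letter" where
  "linv x = (fst x, \<not> snd x)"

definition BS_rel :: "nat \<Rightarrow> nat \<Rightarrow> letter list" where
  "BS_rel p q = [(GT, False)] @ replicate p (GA, False) @ [(GT, True)] @ replicate q (GA, True)"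

text \<open>The congruence on words generated by free cancellation and the relator;
the quotient is the group BS(p,q) = <a, t | t a^p t^-1 = a^q>.\<close>
inductive BS_eq :: "nat \<Rightarrow> nat \<Rightarrow> letter list \<Rightarrow> letter list \<Rightarrow> bool" for p q where
  refl: "BS_eq p q w w"
| sym: "BS_eq p q u v \<Longrightarrow> BS_eq p q v u"
| trans: "BS_eq p q u v \<Longrightarrow> BS_eq p q v w \<Longrightarrow> BS_eq p q u w"
| cancel: "BS_eq p q (u @ [x, linv x] @ v) (u @ v)"
| rel: "BS_eq p q (u @ BS_rel p q @ v) (u @ v)"

definition BS_elem :: "nat \<Rightarrow> nat \<Rightarrow> letter list \<Rightarrow> letter list set" where
  "BS_elem p q w = {v. BS_eq p q w v}"

definition BS_group :: "nat \<Rightarrow> nat \<Rightarrow> letter list set set" where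
  "BS_group p q = range (BS_elem p q)"

definition BS_word_length :: "nat \<Rightarrow> nat \<Rightarrow> letter list set \<Rightarrow> nat" where
  "BS_word_length p q X = (LEAST n. \<exists>w\<in>X. length w = n)"

definition BS_gamma :: "nat \<Rightarrow> nat \<Rightarrow> nat \<Rightarrow> nat" where
  "BS_gamma p q n = card {X \<in> BS_group p q. BS_word_length p q X \<le> n}"

definition BS_growth_rate :: "nat \<Rightarrow> nat \<Rightarrow> real" where
  "BS_growth_rate p q = lim (\<lambda>n. root n (real (BS_gamma p q n)))"

definition BS_P :: "nat \<Rightarrow> nat \<Rightarrow> real \<Rightarrow> real" where
  "BS_P p q x =
    (let k = p div 2; l = q div 2;
         Ck = (if even p then 1 else 2 :: real);
         Cl = (if even q then 1 else 2 :: real)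
     in if p = 2 \<and> q = 2 then x^2 - x - 2
        else if p = 2 \<and> q = 3 then x^2 - x - 3
        else if p = 2 then
          x^(l+1) - x^l - x^(l-1) - 2 * (\<Sum>i=1..l-1. x^i) - Cl
        else if p = 3 \<and> q = 3 then x^2 - x - 4
        else if p = 3 then
          x^(l+1) - x^l - 2 * x^(l-1) - 2 * (\<Sum>i=1..l-1. x^i) - Cl
        else
          x^(l+1) - x^l - 2 * (\<Sum>i=l-k+1..l-1. x^i) - Ck * x^(l-k)
            - 2 * (\<Sum>i=1..l-1. x^i) - Cl)"

end

theory Submission
  imports Defs "HOL-Computational_Algebra.Polynomial" "HOL-Library.Centered_Division"
begin

text \<open>Every element of \<open>BS(p,q)\<close> has a Britton normal form
  \<open>a^r\<^sub>1 t^\<epsilon>\<^sub>1 \<cdots> a^r\<^sub>k t^\<epsilon>\<^sub>k a^m\<close> in which each digit \<open>r\<^sub>i\<close> is a centered residue modulo \<open>q\<close>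
  if \<open>\<epsilon>\<^sub>i = 1\<close> and modulo \<open>p\<close> if \<open>\<epsilon>\<^sub>i = -1\<close>, and no pinch \<open>t^\<epsilon> a^0 t^-\<epsilon>\<close> occurs. Hence the
  words in the code letters \<open>a^r t^\<plusminus>1\<close> of length \<open>\<bar>r\<bar> + 1\<close>, where a letter with \<open>r = 0\<close>
  repeats the previous sign of \<open>t\<close>, represent pairwise distinct elements. If \<open>\<rho> \<ge> 1\<close> solves the
  characteristic equation \<open>\<Sum>\<^sub>c \<rho>^-\<bar>c\<bar> = 1\<close> of this code, which is \<open>P\<^sub>p\<^sub>q(\<rho>) = 0\<close>, there are
  at least a constant times \<open>\<rho>^n\<close> code words of length \<open>n\<close>, and Fekete's lemma for the submultiplicative
  \<open>\<gamma>\<close> bounds the growth rate below by \<open>\<rho>\<close>.\<close>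

lemma BS_eq_in_context: "BS_eq p q u v \<Longrightarrow> BS_eq p q (x @ u @ y) (x @ v @ y)"
proof (induction rule: BS_eq.induct)
  case (cancel u z v)
  show ?case using BS_eq.cancel[of p q "x @ u" z "v @ y"] by simp
next
  case (rel u v)
  show ?case using BS_eq.rel[of p q "x @ u" "v @ y"] by simp
qed (blast intro: BS_eq.refl BS_eq.sym BS_eq.trans)+

lemma BS_eq_append:
  assumes "BS_eq p q u u'" and "BS_eq p q v v'"
  shows "BS_eq p q (u @ v) (u' @ v')"
  using BS_eq_in_context[OF assms(1), of "[]" v] BS_eq_in_context[OF assms(2), of u' "[]"]
  by (auto intro: BS_eq.trans)

lemma BS_elem_eq_iff: "BS_elem p q u = BS_elem p q v \<longleftrightarrow> BS_eq p q u v"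
  unfolding BS_elem_def by (auto intro: BS_eq.refl BS_eq.sym BS_eq.trans)

lemma BS_word_length_le: "BS_word_length p q (BS_elem p q w) \<le> length w"
  unfolding BS_word_length_def BS_elem_def by (rule Least_le) (auto intro: BS_eq.refl)

lemma BS_geodesic_word:
  assumes "X \<in> BS_group p q"
  obtains w where "X = BS_elem p q w" and "length w = BS_word_length p q X"
proof -
  obtain u where X: "X = BS_elem p q u" using assms by (auto simp: BS_group_def)
  have "\<exists>w\<in>X. length w = BS_word_length p q X"
    unfolding BS_word_length_def by (rule LeastI_ex) (auto simp: X BS_elem_def intro: BS_eq.refl)
  then obtain w where "w \<in> X" and "length w = BS_word_length p q X" by blast
  moreover from \<open>w \<in> X\<close> have "X = BS_elem p q w"
    using X BS_elem_eq_iff by (auto simp: BS_elem_def)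
  ultimately show ?thesis using that by blast
qed

definition BS_ball :: "nat \<Rightarrow> nat \<Rightarrow> nat \<Rightarrow> letter list set set" where
  "BS_ball p q n = {X \<in> BS_group p q. BS_word_length p q X \<le> n}"

lemma BS_gamma_eq_card_ball: "BS_gamma p q n = card (BS_ball p q n)"
  by (simp add: BS_gamma_def BS_ball_def)

lemma BS_elem_in_ball: "length w \<le> n \<Longrightarrow> BS_elem p q w \<in> BS_ball p q n"
  using BS_word_length_le[of p q w] by (auto simp: BS_ball_def BS_group_def)

lemma finite_UNIV_letter: "finite (UNIV :: letter set)"
proof -
  have "finite (UNIV :: gen set)"
    by (rule finite_subset[of _ "{GA, GT}"]) (use gen.exhaust in auto)
  then show ?thesis by (simp add: finite_Prod_UNIV)
qed

lemma finite_BS_ball: "finite (BS_ball p q n)"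
proof (rule finite_subset)
  show "BS_ball p q n \<subseteq> BS_elem p q ` {w. set w \<subseteq> UNIV \<and> length w \<le> n}"
    by (auto simp: BS_ball_def elim!: BS_geodesic_word)
  show "finite (BS_elem p q ` {w. set w \<subseteq> UNIV \<and> length w \<le> n})"
    by (intro finite_imageI finite_lists_length_le finite_UNIV_letter)
qed

lemma BS_gamma_ge_1: "1 \<le> BS_gamma p q n"
  using BS_elem_in_ball[of "[]" n p q] finite_BS_ball[of p q n]
  by (auto simp: BS_gamma_eq_card_ball Suc_le_eq card_gt_0_iff)

lemma BS_gamma_submult: "BS_gamma p q (m + n) \<le> BS_gamma p q m * BS_gamma p q n"
proof -
  have "\<forall>X\<in>BS_group p q. \<exists>w. X = BS_elem p q w \<and> length w = BS_word_length p q X"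
    by (blast elim: BS_geodesic_word)
  then obtain geo where geo: "\<And>X. X \<in> BS_group p q \<Longrightarrow>
      X = BS_elem p q (geo X) \<and> length (geo X) = BS_word_length p q X"
    by metis
  define halves where "halves X = (BS_elem p q (take m (geo X)), BS_elem p q (drop m (geo X)))" for X
  have "inj_on halves (BS_ball p q (m + n))"
  proof (rule inj_onI)
    fix X Y assume X: "X \<in> BS_ball p q (m + n)" and Y: "Y \<in> BS_ball p q (m + n)"
      and "halves X = halves Y"
    then have "BS_eq p q (take m (geo X) @ drop m (geo X)) (take m (geo Y) @ drop m (geo Y))"
      by (intro BS_eq_append) (auto simp: halves_def BS_elem_eq_iff)
    then have "BS_elem p q (geo X) = BS_elem p q (geo Y)"
      by (simp add: BS_elem_eq_iff)
    with X Y show "X = Y" using geo by (auto simp: BS_ball_def)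
  qed
  moreover have "halves X \<in> BS_ball p q m \<times> BS_ball p q n" if "X \<in> BS_ball p q (m + n)" for X
  proof -
    have "length (geo X) \<le> m + n" using that geo[of X] by (auto simp: BS_ball_def)
    then show ?thesis by (auto simp: halves_def intro!: BS_elem_in_ball)
  qed
  then have "halves ` BS_ball p q (m + n) \<subseteq> BS_ball p q m \<times> BS_ball p q n" by blast
  ultimately have "card (BS_ball p q (m + n)) \<le> card (BS_ball p q m \<times> BS_ball p q n)"
    by (intro card_inj_on_le) (simp_all add: finite_BS_ball)
  then show ?thesis by (simp add: BS_gamma_eq_card_ball card_cartesian_product)
qed

section \<open>Growth rates of submultiplicative sequences\<close>

lemma subadditive_le_multiple:
  fixes a :: "nat \<Rightarrow> real"
  assumes sub: "\<And>m n. a (m + n) \<le> a m + a n"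
  shows "a (k * m + r) \<le> real k * a m + a r"
proof (induction k)
  case (Suc k)
  have "a (Suc k * m + r) \<le> a m + a (k * m + r)"
    using sub[of m "k * m + r"] by (simp add: add.assoc)
  with Suc show ?case by (simp add: algebra_simps)
qed simp

lemma subadditive_quotient_le:
  fixes a :: "nat \<Rightarrow> real"
  assumes sub: "\<And>m n. a (m + n) \<le> a m + a n" and nonneg: "\<And>n. 0 \<le> a n"
    and "0 < m" and "0 < n"
  shows "a n / n \<le> a m / m + (\<Sum>r<m. a r) / n"
proof -
  have "a n \<le> real (n div m) * a m + a (n mod m)"
    using subadditive_le_multiple[OF sub, of "n div m" m "n mod m"] by simp
  also have "real (n div m) * a m \<le> n / m * a m"
    using of_nat_div_le_of_nat[of n m] nonneg by (rule mult_right_mono)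
  also have "a (n mod m) \<le> (\<Sum>r<m. a r)"
    by (rule member_le_sum) (use nonneg \<open>0 < m\<close> in auto)
  finally show ?thesis using \<open>0 < m\<close> \<open>0 < n\<close> by (simp add: field_simps)
qed

lemma fekete_convergent:
  fixes a :: "nat \<Rightarrow> real"
  assumes sub: "\<And>m n. a (m + n) \<le> a m + a n" and nonneg: "\<And>n. 0 \<le> a n"
  shows "convergent (\<lambda>n. a n / n)"
proof -
  define L where "L = (INF n\<in>{0<..}. a n / n)"
  have bdd: "bdd_below ((\<lambda>n. a n / n) ` {0<..})"
    by (rule bdd_belowI[of _ 0]) (use nonneg in auto)
  have "(\<lambda>n. a n / n) \<longlonglongrightarrow> L"
  proof (rule order_tendstoI)
    fix u assume "u < L"
    have "u < a n / n" if "0 < n" for n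
      using \<open>u < L\<close> cINF_lower[OF bdd, of n] that by (simp add: L_def)
    then show "\<forall>\<^sub>F n in sequentially. u < a n / n"
      by (auto simp: eventually_sequentially intro: exI[of _ 1])
  next
    fix u assume "L < u"
    then obtain m where "0 < m" and m: "a m / m < u"
      using cInf_lessD[of "(\<lambda>n. a n / n) ` {0<..}" u] by (auto simp: L_def)
    have bound: "a n / n < u" if "(\<Sum>r<m. a r) / n < u - a m / m" and "0 < n" for n
      using subadditive_quotient_le[OF sub nonneg \<open>0 < m\<close> \<open>0 < n\<close>] that(1) by linarith
    have "\<forall>\<^sub>F n in sequentially. (\<Sum>r<m. a r) / n < u - a m / m"
      using m by (intro order_tendstoD(2)[OF lim_const_over_n]) simp
    moreover have "\<forall>\<^sub>F n in sequentially. 0 < n"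
      by (rule eventually_gt_at_top)
    ultimately show "\<forall>\<^sub>F n in sequentially. a n / n < u"
      by eventually_elim (rule bound)
  qed
  then show ?thesis by (rule convergentI)
qed

lemma growth_rate_lower_bound:
  fixes \<gamma> :: "nat \<Rightarrow> nat" and c \<rho> :: real
  assumes pos: "\<And>n. 1 \<le> \<gamma> n" and submult: "\<And>m n. \<gamma> (m + n) \<le> \<gamma> m * \<gamma> n"
    and "0 < c" and "0 \<le> \<rho>" and lower: "\<And>n. c * \<rho> ^ n \<le> \<gamma> n"
  shows "\<rho> \<le> lim (\<lambda>n. root n (\<gamma> n))"
proof -
  define a where "a n = ln (\<gamma> n)" for n
  have "a (m + n) \<le> a m + a n" for m n
  proof -
    have "real (\<gamma> (m + n)) \<le> real (\<gamma> m) * real (\<gamma> n)"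
      using submult[of m n] by (simp flip: of_nat_mult)
    then have "ln (\<gamma> (m + n)) \<le> ln (real (\<gamma> m) * real (\<gamma> n))"
      using pos[of "m + n"] by (intro ln_mono) auto
    then show ?thesis
      using pos[of m] pos[of n] by (simp add: a_def ln_mult)
  qed
  moreover have "0 \<le> a n" for n
    using pos[of n] by (simp add: a_def)
  ultimately obtain \<mu> where \<mu>: "(\<lambda>n. a n / n) \<longlonglongrightarrow> \<mu>"
    using fekete_convergent[of a] by (auto simp: convergent_def)
  have "root n (\<gamma> n) = exp (a n / n)" if "0 < n" for n
    using that pos[of n] by (simp add: a_def root_powr_inverse powr_def field_simps)
  then have root_lim: "(\<lambda>n. root n (\<gamma> n)) \<longlonglongrightarrow> exp \<mu>"
    by (intro Lim_transform_eventually[OF tendsto_exp[OF \<mu>]])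
      (auto simp: eventually_sequentially intro: exI[of _ 1])
  have lower_lim: "(\<lambda>n. root n c * \<rho>) \<longlonglongrightarrow> 1 * \<rho>"
    by (intro tendsto_intros LIMSEQ_root_const \<open>0 < c\<close>)
  have "root n c * \<rho> \<le> root n (\<gamma> n)" if "0 < n" for n
  proof -
    have "root n c * \<rho> = root n (c * \<rho> ^ n)"
      using that \<open>0 \<le> \<rho>\<close> by (simp add: real_root_mult real_root_power_cancel)
    also have "\<dots> \<le> root n (\<gamma> n)"
      using that lower[of n] by (rule real_root_le_mono)
    finally show ?thesis .
  qed
  then have "1 * \<rho> \<le> exp \<mu>"
    by (intro LIMSEQ_le[OF lower_lim root_lim] exI[of _ 1]) simp
  then show ?thesis
    using limI[OF root_lim] by simp
qed

section \<open>Words over a weighted alphabet\<close>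

definition weighted_words :: "'a set \<Rightarrow> ('a \<Rightarrow> nat) \<Rightarrow> nat \<Rightarrow> 'a list set" where
  "weighted_words W wt n = {cs. set cs \<subseteq> W \<and> sum_list (map wt cs) = n}"

lemma finite_weighted_words:
  assumes "finite W" and "\<forall>c\<in>W. 1 \<le> wt c"
  shows "finite (weighted_words W wt n)"
proof (rule finite_subset)
  have "length cs \<le> sum_list (map wt cs)" if "set cs \<subseteq> W" for cs
    using that assms(2) by (induction cs) force+
  then show "weighted_words W wt n \<subseteq> {cs. set cs \<subseteq> W \<and> length cs \<le> n}"
    by (auto simp: weighted_words_def)
  show "finite {cs. set cs \<subseteq> W \<and> length cs \<le> n}"
    by (rule finite_lists_length_le[OF \<open>finite W\<close>])
qed

lemma sum_card_weighted_words_le: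
  assumes "finite W" and wt: "\<forall>c\<in>W. 1 \<le> wt c \<and> wt c \<le> n"
  shows "(\<Sum>c\<in>W. card (weighted_words W wt (n - wt c))) \<le> card (weighted_words W wt n)"
proof -
  let ?A = "\<lambda>c. (#) c ` weighted_words W wt (n - wt c)"
  have "(\<Sum>c\<in>W. card (weighted_words W wt (n - wt c))) = (\<Sum>c\<in>W. card (?A c))"
    by (simp add: card_image)
  also have "\<dots> = card (\<Union>c\<in>W. ?A c)"
    by (rule card_UN_disjoint[symmetric]) (use assms in \<open>auto intro!: finite_weighted_words\<close>)
  also have "\<dots> \<le> card (weighted_words W wt n)"
    using wt by (intro card_mono finite_weighted_words \<open>finite W\<close>) (auto simp: weighted_words_def)
  finally show ?thesis .
qed

text \<open>\<open>char_eq\<close> says \<open>\<Sum>c\<in>W. \<rho>^-(wt c) = 1\<close>, so \<open>\<rho> ^ n / \<rho> ^ L\<close> is a subsolution of the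
  recursion \<open>N n \<ge> (\<Sum>c\<in>W. N (n - wt c))\<close> satisfied by the numbers of words.\<close>
lemma card_weighted_words_ge:
  fixes \<rho> :: real
  assumes "finite W" and wt: "\<forall>c\<in>W. 1 \<le> wt c \<and> wt c \<le> L"
    and "c\<^sub>1 \<in> W" and "wt c\<^sub>1 = 1" and "1 \<le> \<rho>"
    and char_eq: "(\<Sum>c\<in>W. \<rho> ^ (L - wt c)) = \<rho> ^ L"
  shows "\<rho> ^ n / \<rho> ^ L \<le> card (weighted_words W wt n)"
proof (induction n rule: less_induct)
  case (less n)
  show ?case
  proof (cases "n < L")
    case True
    have "replicate n c\<^sub>1 \<in> weighted_words W wt n"
      using assms by (auto simp: weighted_words_def sum_list_replicate)
    then have "1 \<le> card (weighted_words W wt n)"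
      using finite_weighted_words[of W wt n] assms by (auto simp: Suc_le_eq card_gt_0_iff)
    moreover have "\<rho> ^ n \<le> \<rho> ^ L"
      using True \<open>1 \<le> \<rho>\<close> by (intro power_increasing) auto
    then have "\<rho> ^ n / \<rho> ^ L \<le> 1"
      using \<open>1 \<le> \<rho>\<close> by (simp add: divide_le_eq_1)
    ultimately show ?thesis by linarith
  next
    case False
    have "\<rho> ^ n = \<rho> ^ (n - L) * (\<Sum>c\<in>W. \<rho> ^ (L - wt c))"
      using False by (simp add: char_eq flip: power_add)
    also have "\<dots> = (\<Sum>c\<in>W. \<rho> ^ (n - wt c))"
      unfolding sum_distrib_left using wt False by (intro sum.cong) (auto simp flip: power_add)
    finally have "\<rho> ^ n / \<rho> ^ L = (\<Sum>c\<in>W. \<rho> ^ (n - wt c) / \<rho> ^ L)"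
      by (simp add: sum_divide_distrib)
    also have "\<dots> \<le> (\<Sum>c\<in>W. real (card (weighted_words W wt (n - wt c))))"
      using wt False by (intro sum_mono less) auto
    also have "\<dots> \<le> card (weighted_words W wt n)"
    proof -
      have "(\<Sum>c\<in>W. card (weighted_words W wt (n - wt c))) \<le> card (weighted_words W wt n)"
        using wt False by (intro sum_card_weighted_words_le \<open>finite W\<close>) auto
      then show ?thesis by (simp flip: of_nat_sum)
    qed
    finally show ?thesis .
  qed
qed

lemma finite_roots_monic_power_sum:
  fixes e :: "'a \<Rightarrow> nat"
  assumes "finite W" and "\<forall>c\<in>W. e c < L"
  shows "finite {x::real. x ^ L - (\<Sum>c\<in>W. x ^ e c) = 0}"
proof -
  define P :: "real poly" where "P = monom 1 L - (\<Sum>c\<in>W. monom 1 (e c))"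
  have "coeff P L = 1"
    using assms(2) by (auto simp: P_def coeff_sum coeff_monom intro!: sum.neutral)
  then have "P \<noteq> 0" by auto
  then show ?thesis
    using poly_roots_finite[of P] by (simp add: P_def poly_sum poly_monom)
qed

lemma exists_root_ge_1:
  fixes wt :: "'a \<Rightarrow> nat"
  assumes "finite W" and "2 \<le> card W" and wt: "\<forall>c\<in>W. 1 \<le> wt c \<and> wt c \<le> L"
  shows "\<exists>x\<ge>1. x ^ L - (\<Sum>c\<in>W. x ^ (L - wt c)) = (0::real)"
proof -
  define f where "f x = x ^ L - (\<Sum>c\<in>W. x ^ (L - wt c))" for x :: real
  define N where "N = real (card W) + 1"
  obtain c where "c \<in> W" using \<open>2 \<le> card W\<close> by fastforce
  with wt have "1 \<le> L" by force
  have "f 1 \<le> 0" using \<open>2 \<le> card W\<close> by (simp add: f_def)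
  moreover have "0 \<le> f N"
  proof -
    have "(\<Sum>c\<in>W. N ^ (L - wt c)) \<le> (\<Sum>c\<in>W. N ^ (L - 1))"
      using wt by (intro sum_mono power_increasing) (auto simp: N_def)
    also have "\<dots> \<le> N * N ^ (L - 1)"
      by (simp add: N_def)
    also have "\<dots> = N ^ L"
      using \<open>1 \<le> L\<close> by (simp flip: power_Suc)
    finally show ?thesis by (simp add: f_def)
  qed
  moreover have "\<forall>x. 1 \<le> x \<and> x \<le> N \<longrightarrow> isCont f x"
    unfolding f_def by (intro allI impI continuous_intros)
  ultimately show ?thesis
    using IVT[of f 1 0 N] by (force simp: N_def f_def)
qed

lemma largest_root_ge_1:
  fixes wt :: "'a \<Rightarrow> nat"
  assumes "finite W" and "2 \<le> card W" and "\<forall>c\<in>W. 1 \<le> wt c \<and> wt c \<le> L"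
  defines "\<rho> \<equiv> Max {x::real. x ^ L - (\<Sum>c\<in>W. x ^ (L - wt c)) = 0}"
  shows "1 \<le> \<rho>" and "(\<Sum>c\<in>W. \<rho> ^ (L - wt c)) = \<rho> ^ L"
proof -
  let ?R = "{x::real. x ^ L - (\<Sum>c\<in>W. x ^ (L - wt c)) = 0}"
  have "finite ?R"
    using assms by (intro finite_roots_monic_power_sum) auto
  moreover obtain x where "1 \<le> x" "x \<in> ?R"
    using exists_root_ge_1[OF assms(1-3)] by blast
  ultimately have "\<rho> \<in> ?R" and "x \<le> \<rho>"
    unfolding \<rho>_def using Max_in Max_ge by blast+
  with \<open>1 \<le> x\<close> show "1 \<le> \<rho>" and "(\<Sum>c\<in>W. \<rho> ^ (L - wt c)) = \<rho> ^ L"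
    by auto
qed

section \<open>Britton normal forms\<close>

definition centered_digits :: "int \<Rightarrow> int set" where
  "centered_digits d = {- (d div 2) ..< d - d div 2}"

lemma cmod_in_centered_digits: "0 < d \<Longrightarrow> m cmod d \<in> centered_digits d"
  using cmod_less_divisor[of d m] divisor_less_equal_cmod[of d m]
  by (simp add: centered_digits_def)

lemma zero_in_centered_digits: "0 < d \<Longrightarrow> 0 \<in> centered_digits d"
  by (simp add: centered_digits_def)

lemma centered_digits_of_nat:
  assumes "1 \<le> n"
  shows "centered_digits (int n) = {- int (n div 2) .. int ((n - 1) div 2)}"
proof -
  have "int n div 2 = int (n div 2)" by linarith
  moreover have "int n - int (n div 2) = int ((n - 1) div 2) + 1" using assms by linarith
  ultimately show ?thesis by (auto simp: centered_digits_def)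
qed

lemma centered_digit_unique:
  assumes "0 < d" and "r \<in> centered_digits d"
  shows "(r + d * j) cmod d = r" and "(r + d * j) cdiv d = j"
proof -
  have r: "0 \<le> r + d div 2" "r + d div 2 < d"
    using assms by (auto simp: centered_digits_def)
  have eq: "r + d * j + d div 2 = (r + d div 2) + d * j" by simp
  have "(r + d * j + d div 2) mod d = r + d div 2" "(r + d * j + d div 2) div d = j"
    unfolding eq using r \<open>0 < d\<close> by simp_all
  then show "(r + d * j) cmod d = r" and "(r + d * j) cdiv d = j"
    using \<open>0 < d\<close> by (simp_all add: centered_modulo_def centered_divide_def)
qed

lemma centered_digit_dvd_imp_zero:
  assumes "0 < d" and "r \<in> centered_digits d" and "d dvd r"
  shows "r = 0"
proof -
  obtain j where "r = d * j" using \<open>d dvd r\<close> by blast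
  then show ?thesis
    using centered_digit_unique(1)[OF assms(1,2), of 0]
      centered_digit_unique(1)[OF assms(1) zero_in_centered_digits[OF assms(1)], of j]
    by simp
qed

lemma cmod_cdiv_add_divisor:
  assumes "0 < d"
  shows "(m + d) cmod d = m cmod d" and "(m + d) cdiv d = m cdiv d + 1"
proof -
  have "m + d = m cmod d + d * (m cdiv d + 1)"
    using cmod_mult_cdiv_eq[of m d] by (simp add: algebra_simps)
  then show "(m + d) cmod d = m cmod d" and "(m + d) cdiv d = m cdiv d + 1"
    using centered_digit_unique[OF assms cmod_in_centered_digits[OF assms]] by simp_all
qed

text \<open>A pair \<open>(bs, m)\<close> with \<open>bs = [(r\<^sub>k, e\<^sub>k), \<dots>, (r\<^sub>1, e\<^sub>1)]\<close> stands for
  \<open>a^r\<^sub>1 t^\<epsilon>\<^sub>1 \<cdots> a^r\<^sub>k t^\<epsilon>\<^sub>k a^m\<close>, where \<open>e\<^sub>i = True\<close> means \<open>\<epsilon>\<^sub>i = -1\<close>.\<close>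

type_synonym block = "int \<times> bool"

fun top_dir :: "block list \<Rightarrow> bool option" where
  "top_dir [] = None"
| "top_dir ((r, e) # _) = Some e"

text \<open>Writing \<open>t^e\<close> for \<open>t^-1\<close> if \<open>e\<close> and for \<open>t\<close> otherwise, the relation \<open>t a^p t^-1 = a^q\<close>
  reads \<open>a^(t_divisor p q e) t^e = t^e a^(t_divisor p q (\<not> e))\<close>.\<close>
definition t_divisor :: "int \<Rightarrow> int \<Rightarrow> bool \<Rightarrow> int" where
  "t_divisor p q e = (if e then p else q)"

text \<open>Right multiplication by \<open>t^e\<close>: either it cancels a pinch against the top block, or
  \<open>m = d j + r\<close> with a centered digit \<open>r\<close>, and \<open>a^(d j)\<close> is moved across \<open>t^e\<close>.\<close>
fun nf_mult_t :: "int \<Rightarrow> int \<Rightarrow> bool \<Rightarrow> block list \<times> int \<Rightarrow> block list \<times> int" where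
  "nf_mult_t p q e (bs, m) =
    (let d = t_divisor p q e; d' = t_divisor p q (\<not> e) in
     if top_dir bs = Some (\<not> e) \<and> d dvd m then (tl bs, fst (hd bs) + d' * (m div d))
     else ((m cmod d, e) # bs, d' * (m cdiv d)))"

fun reduced :: "int \<Rightarrow> int \<Rightarrow> block list \<Rightarrow> bool" where
  "reduced p q [] = True"
| "reduced p q ((r, e) # bs) \<longleftrightarrow>
    r \<in> centered_digits (t_divisor p q e) \<and> (top_dir bs = Some (\<not> e) \<longrightarrow> r \<noteq> 0) \<and> reduced p q bs"

fun nf_step :: "int \<Rightarrow> int \<Rightarrow> letter \<Rightarrow> block list \<times> int \<Rightarrow> block list \<times> int" where
  "nf_step p q (GA, e) (bs, m) = (bs, if e then m - 1 else m + 1)"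
| "nf_step p q (GT, e) x = nf_mult_t p q e x"

fun block_word :: "block \<Rightarrow> letter list" where
  "block_word (r, e) = replicate (nat \<bar>r\<bar>) (GA, r < 0) @ [(GT, e)]"

lemma reduced_appendD: "reduced p q (xs @ ys) \<Longrightarrow> reduced p q ys"
proof (induction xs)
  case (Cons c xs)
  then show ?case by (cases c) simp
qed simp

context
  fixes p q :: int
  assumes pos: "0 < p" "0 < q"
begin

lemma t_divisor_pos: "0 < t_divisor p q e"
  using pos by (simp add: t_divisor_def)

lemma reduced_nf_mult_t:
  assumes "reduced p q bs"
  shows "reduced p q (fst (nf_mult_t p q e (bs, m)))"
proof (cases "top_dir bs = Some (\<not> e) \<and> t_divisor p q e dvd m")
  case True
  with assms show ?thesis by (cases bs) auto
next
  case False
  have "m cmod t_divisor p q e \<noteq> 0" if "top_dir bs = Some (\<not> e)"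
  proof
    assume "m cmod t_divisor p q e = 0"
    then have "m = t_divisor p q e * (m cdiv t_divisor p q e)"
      using cmod_mult_cdiv_eq[of m "t_divisor p q e"] by simp
    then have "t_divisor p q e dvd m" by (rule dvdI)
    with False that show False by blast
  qed
  with False assms show ?thesis
    by (auto simp: Let_def cmod_in_centered_digits t_divisor_pos)
qed

lemma nf_mult_t_inverse:
  assumes "reduced p q bs"
  shows "nf_mult_t p q (\<not> e) (nf_mult_t p q e (bs, m)) = (bs, m)"
proof (cases "top_dir bs = Some (\<not> e) \<and> t_divisor p q e dvd m")
  case True
  then obtain r rest where bs: "bs = (r, \<not> e) # rest"
    by (cases bs rule: top_dir.cases) auto
  let ?d = "t_divisor p q (\<not> e)"
  have r: "r \<in> centered_digits ?d" "top_dir rest = Some e \<Longrightarrow> r \<noteq> 0"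
    using assms bs by auto
  have "\<not> (top_dir rest = Some e \<and> ?d dvd r + ?d * (m div t_divisor p q e))"
    using r centered_digit_dvd_imp_zero[OF t_divisor_pos r(1)] by (auto simp: dvd_add_left_iff)
  then show ?thesis
    using True bs centered_digit_unique[OF t_divisor_pos r(1)] by (auto simp: Let_def)
next
  case False
  then have "nf_mult_t p q e (bs, m) =
      ((m cmod t_divisor p q e, e) # bs, t_divisor p q (\<not> e) * (m cdiv t_divisor p q e))"
    by (auto simp: Let_def)
  then show ?thesis
    using t_divisor_pos[of "\<not> e"] cmod_mult_cdiv_eq[of m "t_divisor p q e"] by (simp add: Let_def)
qed

lemma nf_mult_t_add_divisor:
  "nf_mult_t p q e (bs, m + t_divisor p q e) = apsnd (\<lambda>n. n + t_divisor p q (\<not> e)) (nf_mult_t p q e (bs, m))"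
  using cmod_cdiv_add_divisor[OF t_divisor_pos[of e], of m] t_divisor_pos[of e]
  by (auto simp: Let_def algebra_simps div_add_self2)

lemma reduced_fold_nf_step: "reduced p q (fst x) \<Longrightarrow> reduced p q (fst (fold (nf_step p q) w x))"
proof (induction w arbitrary: x)
  case (Cons l w)
  have "reduced p q (fst (nf_step p q l x))"
    using Cons.prems reduced_nf_mult_t by (cases l; cases x; cases "fst l") auto
  then show ?case using Cons.IH by simp
qed simp

lemma nf_step_linv: "reduced p q (fst x) \<Longrightarrow> nf_step p q (linv l) (nf_step p q l x) = x"
  using nf_mult_t_inverse by (cases l; cases x; cases "fst l") (auto simp: linv_def)

lemma fold_nf_step_replicate_GA:
  "fold (nf_step p q) (replicate n (GA, e)) (bs, m) = (bs, if e then m - int n else m + int n)"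
  by (induction n arbitrary: m) (auto simp del: fold_replicate simp add: algebra_simps)

lemma fold_nf_step_BS_rel:
  assumes "reduced p q bs"
  shows "fold (nf_step p q) (BS_rel (nat p) (nat q)) (bs, m) = (bs, m)"
proof -
  obtain bs' m' where t: "nf_mult_t p q False (bs, m) = (bs', m')"
    by (cases "nf_mult_t p q False (bs, m)")
  have "nf_mult_t p q True (bs', m' + t_divisor p q True) = apsnd (\<lambda>n. n + q) (bs, m)"
    using nf_mult_t_add_divisor[of True bs' m'] nf_mult_t_inverse[OF assms, of False m] t
    by (simp add: t_divisor_def)
  then show ?thesis
    using t pos by (simp add: BS_rel_def fold_nf_step_replicate_GA t_divisor_def del: fold_replicate)
qed

lemma BS_eq_imp_fold_nf_step_eq:
  "BS_eq (nat p) (nat q) u v \<Longrightarrow> reduced p q (fst x) \<Longrightarrow> fold (nf_step p q) u x = fold (nf_step p q) v x"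
proof (induction arbitrary: x rule: BS_eq.induct)
  case (cancel u l v)
  then have "reduced p q (fst (fold (nf_step p q) u x))"
    by (rule reduced_fold_nf_step)
  then show ?case
    using nf_step_linv by simp
next
  case (rel u v)
  then have "reduced p q (fst (fold (nf_step p q) u x))"
    by (rule reduced_fold_nf_step)
  then show ?case
    using fold_nf_step_BS_rel by (cases "fold (nf_step p q) u x") simp
qed simp_all

lemma fold_block_word:
  assumes "reduced p q ((r, e) # bs)"
  shows "fold (nf_step p q) (block_word (r, e)) (bs, 0) = ((r, e) # bs, 0)"
proof -
  let ?d = "t_divisor p q e"
  have r: "r \<in> centered_digits ?d" "top_dir bs = Some (\<not> e) \<Longrightarrow> r \<noteq> 0"
    using assms by auto
  have "\<not> (top_dir bs = Some (\<not> e) \<and> ?d dvd r)"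
    using r centered_digit_dvd_imp_zero[OF t_divisor_pos r(1)] by auto
  then show ?thesis
    using centered_digit_unique[OF t_divisor_pos r(1), of 0]
    by (auto simp: fold_nf_step_replicate_GA Let_def simp del: fold_replicate)
qed

lemma fold_block_words:
  "reduced p q (rev cs @ bs) \<Longrightarrow> fold (nf_step p q) (concat (map block_word cs)) (bs, 0) = (rev cs @ bs, 0)"
proof (induction cs arbitrary: bs)
  case (Cons c cs)
  obtain r e where c: "c = (r, e)" by (cases c)
  have "reduced p q (c # bs)"
    using Cons.prems reduced_appendD[of p q "rev cs"] by simp
  then show ?case
    using Cons fold_block_word[of r e bs] by (simp add: c)
qed simp

end

section \<open>Code words\<close>

definition code_letters :: "nat \<Rightarrow> nat \<Rightarrow> block set" where
  "code_letters p q =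
     (\<lambda>r. (r, False)) ` centered_digits (int q) \<union> (\<lambda>r. (r, True)) ` (centered_digits (int p) - {0})"

fun code_weight :: "block \<Rightarrow> nat" where
  "code_weight (r, e) = nat \<bar>r\<bar> + 1"

lemma finite_code_letters: "finite (code_letters p q)"
  by (simp add: code_letters_def centered_digits_def)

lemma zero_in_code_letters: "1 \<le> q \<Longrightarrow> (0, False) \<in> code_letters p q"
  by (simp add: code_letters_def zero_in_centered_digits)

lemma two_le_card_code_letters:
  assumes "2 \<le> q"
  shows "2 \<le> card (code_letters p q)"
proof -
  have "{(0, False), (-1, False)} \<subseteq> code_letters p q"
    using assms by (auto simp: code_letters_def centered_digits_of_nat)
  from card_mono[OF finite_code_letters this] show ?thesis by simp
qed

lemma code_weight_bounds:
  assumes "p \<le> q" and "1 \<le> p" and "c \<in> code_letters p q"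
  shows "1 \<le> code_weight c \<and> code_weight c \<le> q div 2 + 1"
proof -
  have "p div 2 \<le> q div 2" and "(p - 1) div 2 \<le> q div 2" and "(q - 1) div 2 \<le> q div 2"
    using \<open>p \<le> q\<close> by (simp_all add: div_le_mono)
  with assms show ?thesis
    by (auto simp: code_letters_def centered_digits_of_nat nat_le_iff abs_le_iff; linarith)
qed

text \<open>The code letter \<open>(r, e)\<close> stands for \<open>a^r t^e\<close>, except that \<open>(0, False)\<close> stands for \<open>t^s\<close>
  with the sign \<open>s\<close> of the preceding \<open>t\<close>-letter (initially \<open>t\<close>), so that no pinch can arise.\<close>
fun orient :: "bool \<Rightarrow> block list \<Rightarrow> block list" where
  "orient s [] = []"
| "orient s ((r, e) # cs) = (if r = 0 then (0, s) # orient s cs else (r, e) # orient e cs)"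

definition unorient :: "block \<Rightarrow> block" where
  "unorient c = (if fst c = 0 then (0, False) else c)"

lemma map_unorient_orient: "set cs \<subseteq> code_letters p q \<Longrightarrow> map unorient (orient s cs) = cs"
proof (induction cs arbitrary: s)
  case (Cons c cs)
  then show ?case by (cases c) (auto simp: unorient_def code_letters_def)
qed simp

lemma length_block_words_orient:
  "length (concat (map block_word (orient s cs))) = sum_list (map code_weight cs)"
proof (induction cs arbitrary: s)
  case (Cons c cs)
  then show ?case by (cases c) auto
qed simp

lemma reduced_orient:
  assumes "1 \<le> p" and "1 \<le> q"
  shows "set cs \<subseteq> code_letters p q \<Longrightarrow> reduced (int p) (int q) bs \<Longrightarrow> top_dir bs \<noteq> Some (\<not> s)
    \<Longrightarrow> reduced (int p) (int q) (rev (orient s cs) @ bs)"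
proof (induction cs arbitrary: bs s)
  case (Cons c cs)
  obtain r e where c: "c = (r, e)" by (cases c)
  have zero: "0 \<in> centered_digits (t_divisor (int p) (int q) s)"
    using assms by (simp add: zero_in_centered_digits t_divisor_def)
  show ?case
  proof (cases "r = 0")
    case True
    then show ?thesis
      using Cons.IH[of "(0, s) # bs" s] Cons.prems zero c by auto
  next
    case False
    have "r \<in> centered_digits (t_divisor (int p) (int q) e)"
      using Cons.prems(1) c by (auto simp: code_letters_def t_divisor_def)
    then show ?thesis
      using Cons.IH[of "(r, e) # bs" e] Cons.prems False c by auto
  qed
qed simp

lemma card_code_words_le_BS_gamma:
  assumes "1 \<le> p" and "1 \<le> q"
  shows "card (weighted_words (code_letters p q) code_weight n) \<le> BS_gamma p q n"
proof -
  let ?word = "\<lambda>cs. concat (map block_word (orient False cs))"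
  have nf: "fold (nf_step (int p) (int q)) (?word cs) ([], 0) = (rev (orient False cs), 0)"
    if "set cs \<subseteq> code_letters p q" for cs
    using fold_block_words[of "int p" "int q" "orient False cs" "[]"] reduced_orient[OF assms that, of "[]" False]
      assms by simp
  have "inj_on (\<lambda>cs. BS_elem p q (?word cs)) (weighted_words (code_letters p q) code_weight n)"
  proof (rule inj_onI)
    fix cs ds
    assume "cs \<in> weighted_words (code_letters p q) code_weight n"
      and "ds \<in> weighted_words (code_letters p q) code_weight n"
      and same_elem: "BS_elem p q (?word cs) = BS_elem p q (?word ds)"
    then have cs: "set cs \<subseteq> code_letters p q" and ds: "set ds \<subseteq> code_letters p q"
      by (simp_all add: weighted_words_def)
    from same_elem have "BS_eq (nat (int p)) (nat (int q)) (?word cs) (?word ds)"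
      by (simp add: BS_elem_eq_iff)
    then have "fold (nf_step (int p) (int q)) (?word cs) ([], 0) = fold (nf_step (int p) (int q)) (?word ds) ([], 0)"
      using assms by (intro BS_eq_imp_fold_nf_step_eq) auto
    then have "orient False cs = orient False ds"
      using nf[OF cs] nf[OF ds] by simp
    then show "cs = ds"
      using map_unorient_orient[OF cs] map_unorient_orient[OF ds] by metis
  qed
  moreover have "(\<lambda>cs. BS_elem p q (?word cs)) ` weighted_words (code_letters p q) code_weight n \<subseteq> BS_ball p q n"
    by (auto simp: weighted_words_def length_block_words_orient intro!: BS_elem_in_ball)
  ultimately show ?thesis
    unfolding BS_gamma_eq_card_ball by (rule card_inj_on_le[OF _ _ finite_BS_ball])
qed

section \<open>The polynomial \<open>P\<^sub>p\<^sub>q\<close> as characteristic polynomial of the code\<close>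

lemma sum_Icc_int_abs:
  fixes f :: "nat \<Rightarrow> 'a::comm_monoid_add"
  shows "(\<Sum>r\<in>{- int a..int b}. f (nat \<bar>r\<bar>)) = f 0 + (\<Sum>i=1..a. f i) + (\<Sum>i=1..b. f i)"
proof (induction a)
  case 0
  show ?case
  proof (induction b)
    case (Suc b)
    have "{- int 0..int (Suc b)} = insert (int (Suc b)) {- int 0..int b}" by auto
    with Suc show ?case by (simp add: ac_simps del: of_nat_Suc)
  qed simp
next
  case (Suc a)
  have "{- int (Suc a)..int b} = insert (- int (Suc a)) {- int a..int b}" by auto
  with Suc show ?case by (simp add: ac_simps del: of_nat_Suc)
qed

lemma sum_pow_from_top:
  assumes "1 \<le> l" and "a \<le> l"
  shows "(\<Sum>i=1..a. x ^ (l - i)) = (\<Sum>j=l - a..l - 1. x ^ j)"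
  by (rule sum.reindex_bij_witness[of _ "\<lambda>j. l - j" "\<lambda>i. l - i"]) (use assms in auto)

lemma sum_pow_centered_digits:
  fixes x :: "'a::comm_semiring_1"
  assumes "1 \<le> n" and "n div 2 \<le> l" and "1 \<le> l"
  shows "(\<Sum>r\<in>centered_digits (int n). x ^ (l - nat \<bar>r\<bar>))
    = x ^ l + (\<Sum>j=l - n div 2..l - 1. x ^ j) + (\<Sum>j=l - (n - 1) div 2..l - 1. x ^ j)"
proof -
  have "(n - 1) div 2 \<le> l" using assms(2) by (meson div_le_mono diff_le_self order_trans)
  show ?thesis
    unfolding centered_digits_of_nat[OF \<open>1 \<le> n\<close>] sum_Icc_int_abs[of "\<lambda>i. x ^ (l - i)"]
      sum_pow_from_top[OF \<open>1 \<le> l\<close> \<open>n div 2 \<le> l\<close>] sum_pow_from_top[OF \<open>1 \<le> l\<close> \<open>(n - 1) div 2 \<le> l\<close>]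
    by simp
qed

lemma sum_code_letters:
  fixes x :: "'a::comm_ring_1"
  assumes "1 \<le> p" and "p \<le> q" and "2 \<le> q"
  defines "l \<equiv> q div 2"
  shows "(\<Sum>c\<in>code_letters p q. x ^ (l + 1 - code_weight c))
    = x ^ l + (\<Sum>j=0..l - 1. x ^ j) + (\<Sum>j=l - (q - 1) div 2..l - 1. x ^ j)
        + (\<Sum>j=l - p div 2..l - 1. x ^ j) + (\<Sum>j=l - (p - 1) div 2..l - 1. x ^ j)"
proof -
  have l: "1 \<le> l" "p div 2 \<le> l" "q div 2 \<le> l"
    using assms by (auto simp: div_le_mono)
  have "(\<Sum>c\<in>code_letters p q. x ^ (l + 1 - code_weight c))
      = (\<Sum>r\<in>centered_digits (int q). x ^ (l - nat \<bar>r\<bar>))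
        + (\<Sum>r\<in>centered_digits (int p) - {0}. x ^ (l - nat \<bar>r\<bar>))"
    unfolding code_letters_def
    by (subst sum.union_disjoint) (auto simp: sum.reindex inj_on_def centered_digits_def)
  also have "(\<Sum>r\<in>centered_digits (int p) - {0}. x ^ (l - nat \<bar>r\<bar>))
      = (\<Sum>r\<in>centered_digits (int p). x ^ (l - nat \<bar>r\<bar>)) - x ^ l"
    using assms by (subst sum_diff1) (auto simp: zero_in_centered_digits centered_digits_def)
  finally show ?thesis
    using assms l by (simp add: sum_pow_centered_digits l_def)
qed

lemma BS_P_eq_generic:
  assumes "2 \<le> p" and "p \<le> q"
  defines "k \<equiv> p div 2" and "l \<equiv> q div 2"
  shows "BS_P p q x = x ^ (l + 1) - x ^ l - 2 * (\<Sum>i=l - k + 1..l - 1. x ^ i)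
    - (if even p then 1 else 2) * x ^ (l - k) - 2 * (\<Sum>i=1..l - 1. x ^ i) - (if even q then 1 else 2)"
proof -
  consider "p = 2" "q = 2" | "p = 2" "q = 3" | "p = 2" "4 \<le> q" | "p = 3" "q = 3" | "p = 3" "4 \<le> q"
    | "4 \<le> p"
    using assms by linarith
  then show ?thesis
    by cases (use assms in \<open>auto simp: BS_P_def Let_def power2_eq_square\<close>)
qed

lemma BS_P_eq_code_polynomial:
  assumes "2 \<le> p" and "p \<le> q"
  shows "BS_P p q x = x ^ (q div 2 + 1) - (\<Sum>c\<in>code_letters p q. x ^ (q div 2 + 1 - code_weight c))"
proof -
  define k l where "k = p div 2" and "l = q div 2"
  have kl: "1 \<le> k" "k \<le> l" using assms by (auto simp: k_def l_def div_le_mono)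
  have "(\<Sum>j=0..l - 1. x ^ j) = 1 + (\<Sum>j=1..l - 1. x ^ j)"
    and "(\<Sum>j=l - k..l - 1. x ^ j) = x ^ (l - k) + (\<Sum>j=l - k + 1..l - 1. x ^ j)"
    using kl by (simp_all add: sum.atLeast_Suc_atMost)
  moreover have "(q - 1) div 2 = (if even q then l - 1 else l)"
    and "(p - 1) div 2 = (if even p then k - 1 else k)"
    using assms by (auto simp: k_def l_def elim!: evenE oddE)
  moreover have "l - (l - 1) = 1" and "l - (k - 1) = l - k + 1" using kl by auto
  ultimately show ?thesis
    using assms sum_code_letters[of p q x] BS_P_eq_generic[OF assms, of x]
    by (simp add: k_def[symmetric] l_def[symmetric])
qed

theorem theorem5p3:
  fixes p q :: nat
  assumes "2 \<le> p" and "p \<le> q"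
  shows "Max {x. BS_P p q x = 0} \<le> BS_growth_rate p q"
proof -
  let ?W = "code_letters p q" and ?L = "q div 2 + 1"
  have W: "finite ?W" "2 \<le> card ?W" "\<forall>c\<in>?W. 1 \<le> code_weight c \<and> code_weight c \<le> ?L"
    using assms finite_code_letters two_le_card_code_letters code_weight_bounds by auto
  define \<rho> where "\<rho> = Max {x. BS_P p q x = 0}"
  have "\<rho> = Max {x. x ^ ?L - (\<Sum>c\<in>?W. x ^ (?L - code_weight c)) = 0}"
    by (simp add: \<rho>_def BS_P_eq_code_polynomial[OF assms])
  then have "1 \<le> \<rho>" and char_eq: "(\<Sum>c\<in>?W. \<rho> ^ (?L - code_weight c)) = \<rho> ^ ?L"
    using largest_root_ge_1[OF W] by simp_all
  have lower: "1 / \<rho> ^ ?L * \<rho> ^ n \<le> BS_gamma p q n" for n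
    using card_weighted_words_ge[OF W(1,3) zero_in_code_letters _ \<open>1 \<le> \<rho>\<close> char_eq, of n]
      card_code_words_le_BS_gamma[of p q n] assms
    by (simp add: of_nat_le_iff order_trans)
  show ?thesis
    unfolding BS_growth_rate_def \<rho>_def[symmetric]
    by (rule growth_rate_lower_bound[OF BS_gamma_ge_1 BS_gamma_submult _ _ lower]) (use \<open>1 \<le> \<rho>\<close> in auto)
qed

end
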